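(* Let $X$ be a compact metric space with metric $d$, let $f\colon X\to X$ be a continuous map with the s-limit shadowing property, let $C\in\mathcal{C}(f)$ and $D,E\in\mathcal{D}(C)$. Then for any $n\ge1$, any $x_1,\dots,x_n\in V^s(D)$, any $y_1,\dots,y_n\in\overline{V^s(E)}$, and any $\epsilon>0$, there are $z_1,\dots,z_n\in\overline{V^s(E)}$ and integers $K,L\ge0$ such that $d(y_j,z_j)\le\epsilon$ for all $1\le j\le n$, and $d(f^{K+i}(x_j),f^{L+i}(z_j))\le\epsilon$ for all $1\le j\le n$ and all $i\ge0$.
   Context: A $\delta$-chain of $f$ ($\delta>0$) is a finite sequence $(x_i)_{i=0}^k$, $k\ge1$, with $d(f(x_i),x_{i+1})\le\delta$ for $0\le i\le k-1$; it is a $\delta$-cycle if $x_0=x_k$, with length $k$. Write $x\to y$ if for every $\delta>0$ there is a $\delta$-chain from $x$ to $y$. Let $CR(f)=\{x\colon x\to x\}$; on $CR(f)$ let $x\leftrightarrow y$ iff $x\to y$ and $y\to x$; its classes are the chain components, forming $\mathcal{C}(f)$. For $C\in\mathcal{C}(f)$, $\delta>0$, let $m=m(C,\delta)$ be the gcd of the lengths of all $\delta$-cycles of $f|_C$, and for $x,y\in C$ let $x\sim_{C,\delta}y$ iff there is a $\delta$-chain of $f|_C$ from $x$ to $y$ of length divisible by $m$; $\mathcal{D}(C,\delta)$ is the set of its equivalence classes. Let $x\sim_C y$ iff $x\sim_{C,\delta}y$ for all $\delta>0$; $\mathcal{D}(C)$ is its set of classes. For $D\in\mathcal{D}(C)$,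 $D_\delta$ is the element of $\mathcal{D}(C,\delta)$ containing $D$. $W^s(C)=\{x\colon\lim_i d(f^i(x),C)=0\}$ and $V^s(D)=\bigcap_{\delta>0}\{x\in W^s(C)\colon\lim_i d(f^i(x),f^i(D_\delta))=0\}$; $\overline{V^s(E)}$ denotes the closure in $X$. $f$ has the s-limit shadowing property if for every $\epsilon>0$ there is $\delta>0$ such that for every sequence $(x_i)_{i\ge0}$ with $d(f(x_i),x_{i+1})\le\delta$ for all $i$ and $d(f(x_i),x_{i+1})\to0$ there is $x\in X$ with $d(f^i(x),x_i)\le\epsilon$ for all $i$ and $d(f^i(x),x_i)\to0$. *)

theory Defs
  imports "HOL-Analysis.Analysis"
begin

definition is_chain :: "('a::metric_space \<Rightarrow> 'a) \<Rightarrow> real \<Rightarrow> (nat \<Rightarrow> 'a) \<Rightarrow> nat \<Rightarrow> bool" where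
  "is_chain f \<delta> xi k \<longleftrightarrow> k \<ge> 1 \<and> (\<forall>i<k. dist (f (xi i)) (xi (Suc i)) \<le> \<delta>)"

definition chain_to :: "('a::metric_space \<Rightarrow> 'a) \<Rightarrow> 'a \<Rightarrow> 'a \<Rightarrow> bool" where
  "chain_to f x y \<longleftrightarrow> (\<forall>\<delta>>0. \<exists>xi k. is_chain f \<delta> xi k \<and> xi 0 = x \<and> xi k = y)"

definition CR :: "('a::metric_space \<Rightarrow> 'a) \<Rightarrow> 'a set" where
  "CR f = {x. chain_to f x x}"

definition chain_components :: "('a::metric_space \<Rightarrow> 'a) \<Rightarrow> 'a set set" where
  "chain_components f =
     {C. \<exists>x\<in>CR f. C = {y \<in> CR f. chain_to f x y \<and> chain_to f y x}}"

definition period :: "('a::metric_space \<Rightarrow> 'a) \<Rightarrow> 'a set \<Rightarrow> real \<Rightarrow> nat" where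
  "period f C \<delta> = Gcd {k. \<exists>xi. is_chain f \<delta> xi k \<and> (\<forall>i\<le>k. xi i \<in> C) \<and> xi 0 = xi k}"

definition rel_delta :: "('a::metric_space \<Rightarrow> 'a) \<Rightarrow> 'a set \<Rightarrow> real \<Rightarrow> 'a \<Rightarrow> 'a \<Rightarrow> bool" where
  "rel_delta f C \<delta> x y \<longleftrightarrow> x \<in> C \<and> y \<in> C \<and>
     (\<exists>xi k. is_chain f \<delta> xi k \<and> (\<forall>i\<le>k. xi i \<in> C) \<and> xi 0 = x \<and> xi k = y
            \<and> period f C \<delta> dvd k)"

definition classes_delta :: "('a::metric_space \<Rightarrow> 'a) \<Rightarrow> 'a set \<Rightarrow> real \<Rightarrow> 'a set set" where
  "classes_delta f C \<delta> = {D. \<exists>x\<in>C. D = {y. rel_delta f C \<delta> x y}}"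

definition rel_C :: "('a::metric_space \<Rightarrow> 'a) \<Rightarrow> 'a set \<Rightarrow> 'a \<Rightarrow> 'a \<Rightarrow> bool" where
  "rel_C f C x y \<longleftrightarrow> (\<forall>\<delta>>0. rel_delta f C \<delta> x y)"

definition classes :: "('a::metric_space \<Rightarrow> 'a) \<Rightarrow> 'a set \<Rightarrow> 'a set set" where
  "classes f C = {D. \<exists>x\<in>C. D = {y \<in> C. rel_C f C x y}}"

definition class_delta :: "('a::metric_space \<Rightarrow> 'a) \<Rightarrow> 'a set \<Rightarrow> 'a set \<Rightarrow> real \<Rightarrow> 'a set" where
  "class_delta f C D \<delta> = (THE E. E \<in> classes_delta f C \<delta> \<and> D \<subseteq> E)"

definition Ws :: "('a::metric_space \<Rightarrow> 'a) \<Rightarrow> 'a set \<Rightarrow> 'a set" where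
  "Ws f C = {x. (\<lambda>i. infdist ((f ^^ i) x) C) \<longlonglongrightarrow> 0}"

definition Vs :: "('a::metric_space \<Rightarrow> 'a) \<Rightarrow> 'a set \<Rightarrow> 'a set \<Rightarrow> 'a set" where
  "Vs f C D = (\<Inter>\<delta>\<in>{\<delta>::real. \<delta> > 0}.
     {x \<in> Ws f C. (\<lambda>i. infdist ((f ^^ i) x) ((f ^^ i) ` class_delta f C D \<delta>)) \<longlonglongrightarrow> 0})"

definition s_limit_shadowing :: "('a::metric_space \<Rightarrow> 'a) \<Rightarrow> bool" where
  "s_limit_shadowing f \<longleftrightarrow>
    (\<forall>\<epsilon>>0. \<exists>\<delta>>0. \<forall>xs :: nat \<Rightarrow> 'a.
       (\<forall>i. dist (f (xs i)) (xs (Suc i)) \<le> \<delta>) \<and> (\<lambda>i. dist (f (xs i)) (xs (Suc i))) \<longlonglongrightarrow> 0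
       \<longrightarrow> (\<exists>x. (\<forall>i. dist ((f ^^ i) x) (xs i) \<le> \<epsilon>) \<and> (\<lambda>i. dist ((f ^^ i) x) (xs i)) \<longlonglongrightarrow> 0))"

end

theory Submission
  imports Defs "HOL-Number_Theory.Cong"
begin

text \<open>
  Fix D, E in the same chain component C and a scale g. Chains inside C that join two given
  points have lengths in a single residue class modulo the period m(C,g), their phase; the
  classes in D(C,g) are exactly the level sets of the phase. Since the cycle lengths at any
  point of C form an additively closed set with gcd m(C,g), every sufficiently long length in
  the right residue class is realised, uniformly over C by compactness. Far out along the
  orbits, x lies near the orbit of a point of the class of D and a point w of V^s(E) near y lies
  near the orbit of a point of the class of E. One can therefore build a pseudo-orbit that starts
  on the orbit of w, switches after N steps to the orbit of x, follows it for T steps, switches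
  back to the orbit of w, and is exact from then on; the two switches take M and M0 steps with
  M, M0 independent of T and of the point. The s-limit shadowing property gives a true orbit z
  that is asymptotic to w, hence in V^s(E), and that tracks x with the fixed lags K = N and
  L = N + M. Letting T tend to infinity, compactness produces the required point in the closure.
\<close>

definition chain_between :: "('a::metric_space \<Rightarrow> 'a) \<Rightarrow> real \<Rightarrow> 'a \<Rightarrow> 'a \<Rightarrow> bool" where
  "chain_between f \<delta> a b \<longleftrightarrow> (\<exists>\<xi> k. is_chain f \<delta> \<xi> k \<and> \<xi> 0 = a \<and> \<xi> k = b)"

lemma chain_to_iff_chain_between: "chain_to f a b \<longleftrightarrow> (\<forall>\<delta>>0. chain_between f \<delta> a b)"
  by (simp add: chain_to_def chain_between_def)

definition seq_join :: "(nat \<Rightarrow> 'a) \<Rightarrow> nat \<Rightarrow> (nat \<Rightarrow> 'a) \<Rightarrow> nat \<Rightarrow> 'a" where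
  "seq_join \<xi> k \<zeta> i = (if i \<le> k then \<xi> i else \<zeta> (i - k))"

lemma seq_join_head: "i \<le> k \<Longrightarrow> seq_join \<xi> k \<zeta> i = \<xi> i"
  by (simp add: seq_join_def)

lemma seq_join_tail: "\<xi> k = \<zeta> 0 \<Longrightarrow> seq_join \<xi> k \<zeta> (k + t) = \<zeta> t"
  by (simp add: seq_join_def)

lemma seq_join_step:
  assumes "\<xi> k = \<zeta> 0"
  shows "(seq_join \<xi> k \<zeta> i, seq_join \<xi> k \<zeta> (Suc i)) =
    (if i < k then (\<xi> i, \<xi> (Suc i)) else (\<zeta> (i - k), \<zeta> (Suc (i - k))))"
  using assms by (auto simp: seq_join_def Suc_diff_le)

lemma is_chain_seq_join:
  assumes "is_chain f \<delta> \<xi> k" "is_chain f \<delta> \<zeta> l" "\<xi> k = \<zeta> 0"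
  shows "is_chain f \<delta> (seq_join \<xi> k \<zeta>) (k + l)"
  unfolding is_chain_def
proof (intro conjI allI impI)
  show "1 \<le> k + l" using assms(1) by (simp add: is_chain_def)
next
  fix i assume "i < k + l"
  then show "dist (f (seq_join \<xi> k \<zeta> i)) (seq_join \<xi> k \<zeta> (Suc i)) \<le> \<delta>"
    using seq_join_step[of \<xi> k \<zeta> i] assms by (auto simp: is_chain_def split: if_splits)
qed

lemma is_chain_mono: "is_chain f \<delta> \<xi> k \<Longrightarrow> \<delta> \<le> \<delta>' \<Longrightarrow> is_chain f \<delta>' \<xi> k"
  unfolding is_chain_def by force

lemma chain_between_mono: "chain_between f \<delta> a b \<Longrightarrow> \<delta> \<le> \<delta>' \<Longrightarrow> chain_between f \<delta>' a b"
  unfolding chain_between_def using is_chain_mono by blast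

lemma chain_between_trans:
  assumes "chain_between f \<delta> a b" "chain_between f \<delta> b c"
  shows "chain_between f \<delta> a c"
proof -
  obtain \<xi> k \<zeta> l where "is_chain f \<delta> \<xi> k" "\<xi> 0 = a" "\<xi> k = b" "is_chain f \<delta> \<zeta> l" "\<zeta> 0 = b" "\<zeta> l = c"
    using assms unfolding chain_between_def by blast
  then show ?thesis
    unfolding chain_between_def
    by (intro exI[of _ "seq_join \<xi> k \<zeta>"] exI[of _ "k + l"])
       (simp add: is_chain_seq_join seq_join_head seq_join_tail)
qed

lemma chain_between_prefix: "is_chain f \<delta> \<xi> k \<Longrightarrow> 0 < i \<Longrightarrow> i \<le> k \<Longrightarrow> chain_between f \<delta> (\<xi> 0) (\<xi> i)"
  unfolding chain_between_def is_chain_def by (intro exI[of _ \<xi>] exI[of _ i]) simp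

lemma chain_between_suffix: "is_chain f \<delta> \<xi> k \<Longrightarrow> i < k \<Longrightarrow> chain_between f \<delta> (\<xi> i) (\<xi> k)"
  unfolding chain_between_def is_chain_def
  by (intro exI[of _ "\<lambda>t. \<xi> (i + t)"] exI[of _ "k - i"]) auto

lemma chain_to_trans: "chain_to f a b \<Longrightarrow> chain_to f b c \<Longrightarrow> chain_to f a c"
  unfolding chain_to_iff_chain_between using chain_between_trans by blast

lemma chain_to_step: "chain_to f a (f a)"
  unfolding chain_to_def is_chain_def
  by (intro allI impI exI[of _ "\<lambda>i. if i = 0 then a else f a"] exI[of _ 1]) simp

lemma is_chain_perturb:
  assumes "is_chain f \<delta> \<xi> k" "\<forall>i\<le>k. dist (\<xi> i) (\<zeta> i) < \<eta>"
    and "\<forall>x y. dist x y < \<eta> \<longrightarrow> dist (f x) (f y) \<le> \<rho>"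
  shows "is_chain f (\<rho> + \<delta> + \<eta>) \<zeta> k"
  unfolding is_chain_def
proof (intro conjI allI impI)
  show "1 \<le> k" using assms(1) by (simp add: is_chain_def)
next
  fix i assume i: "i < k"
  have "dist (f (\<zeta> i)) (\<zeta> (Suc i))
      \<le> dist (f (\<zeta> i)) (f (\<xi> i)) + dist (f (\<xi> i)) (\<xi> (Suc i)) + dist (\<xi> (Suc i)) (\<zeta> (Suc i))"
    by (metis add_right_mono dist_triangle order_trans)
  also have "\<dots> \<le> \<rho> + \<delta> + \<eta>"
    using assms i by (intro add_mono) (auto simp: is_chain_def dist_commute less_imp_le)
  finally show "dist (f (\<zeta> i)) (\<zeta> (Suc i)) \<le> \<rho> + \<delta> + \<eta>" .
qed

lemma uniformly_continuous_modulus: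
  assumes "uniformly_continuous_on UNIV f" "e > 0" "c > 0"
  obtains \<eta> where "\<eta> > 0" "\<eta> \<le> c" "\<forall>x y. dist x y < \<eta> \<longrightarrow> dist (f x) (f y) \<le> e"
proof -
  obtain \<eta>0 where "\<eta>0 > 0" "\<forall>x y. dist x y < \<eta>0 \<longrightarrow> dist (f x) (f y) < e"
    using assms(1,2) unfolding uniformly_continuous_on_def by blast
  then show thesis using assms(3) by (intro that[of "min \<eta>0 c"]) (auto intro: less_imp_le)
qed

lemma chain_to_of_approximate_chains:
  assumes "uniformly_continuous_on UNIV f"
    and "\<forall>\<delta>>0. \<exists>p q. dist p a < \<delta> \<and> dist q b < \<delta> \<and> chain_between f \<delta> p q"
  shows "chain_to f a b"
  unfolding chain_to_iff_chain_between
proof (intro allI impI)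
  fix \<delta> :: real assume "\<delta> > 0"
  then obtain \<eta> where \<eta>: "\<eta> > 0" "\<eta> \<le> \<delta>/3" "\<forall>x y. dist x y < \<eta> \<longrightarrow> dist (f x) (f y) \<le> \<delta>/3"
    using uniformly_continuous_modulus[OF assms(1)] by (metis divide_pos_pos zero_less_numeral)
  obtain p q \<xi> k where pq: "dist p a < \<eta>" "dist q b < \<eta>" "is_chain f \<eta> \<xi> k" "\<xi> 0 = p" "\<xi> k = q"
    using assms(2) \<open>\<eta> > 0\<close> unfolding chain_between_def by blast
  have "\<forall>i\<le>k. dist (\<xi> i) ((\<xi>(0 := a, k := b)) i) < \<eta>"
    using pq \<open>\<eta> > 0\<close> by auto
  from is_chain_perturb[OF pq(3) this \<eta>(3)]
  have "is_chain f \<delta> (\<xi>(0 := a, k := b)) k"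
    by (rule is_chain_mono) (use \<eta> in simp)
  moreover have "k \<noteq> 0" using pq(3) by (simp add: is_chain_def)
  ultimately show "chain_between f \<delta> a b"
    unfolding chain_between_def by (intro exI[of _ "\<xi>(0 := a, k := b)"] exI[of _ k]) simp
qed

lemma infdist_lessE:
  assumes "infdist x A < e" "A \<noteq> {}"
  obtains a where "a \<in> A" "dist x a < e"
  using assms by (auto simp: infdist_notempty cINF_less_iff)

lemma infdist_tendsto_0_transfer:
  assumes "(\<lambda>s. infdist (p s) (A s)) \<longlonglongrightarrow> 0" "(\<lambda>s. dist (q s) (p s)) \<longlonglongrightarrow> 0"
  shows "(\<lambda>s. infdist (q s) (A s)) \<longlonglongrightarrow> 0"
proof (rule tendsto_sandwich[of "\<lambda>s. 0" _ _ "\<lambda>s. infdist (p s) (A s) + dist (q s) (p s)"])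
  show "(\<lambda>s. infdist (p s) (A s) + dist (q s) (p s)) \<longlonglongrightarrow> 0"
    using tendsto_add[OF assms] by simp
qed (auto simp: infdist_nonneg infdist_triangle)

lemma Vs_asymptotic:
  assumes "p \<in> Vs f C E" "(\<lambda>s. dist ((f ^^ s) q) ((f ^^ s) p)) \<longlonglongrightarrow> 0"
  shows "q \<in> Vs f C E"
  using assms infdist_tendsto_0_transfer[OF _ assms(2)] unfolding Vs_def Ws_def by auto

lemma continuous_on_funpow:
  fixes f :: "'a::topological_space \<Rightarrow> 'a"
  assumes "continuous_on UNIV f"
  shows "continuous_on UNIV (f ^^ n)"
proof (induction n)
  case (Suc n)
  then show ?case
    using continuous_on_compose[OF Suc continuous_on_subset[OF assms]] by (simp add: o_def)
qed (simp add: continuous_on_id)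

lemma tracking_in_closure_of_finite_horizon_tracking:
  fixes f :: "'a::metric_space \<Rightarrow> 'a"
  assumes "compact (UNIV :: 'a set)" "continuous_on UNIV f"
    and "\<forall>T. \<exists>z\<in>A. dist w z \<le> r \<and> (\<forall>i\<le>T. dist (p i) ((f ^^ (L + i)) z) \<le> r)"
  shows "\<exists>z\<in>closure A. dist w z \<le> r \<and> (\<forall>i. dist (p i) ((f ^^ (L + i)) z) \<le> r)"
proof -
  obtain zs where zs: "\<And>T. zs T \<in> A" "\<And>T. dist w (zs T) \<le> r"
    "\<And>T i. i \<le> T \<Longrightarrow> dist (p i) ((f ^^ (L + i)) (zs T)) \<le> r"
    using assms(3) by metis
  obtain l \<sigma> where \<sigma>: "strict_mono \<sigma>" "(zs \<circ> \<sigma>) \<longlonglongrightarrow> l"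
    using compact_imp_seq_compact[OF assms(1)] unfolding seq_compact_def by blast
  have "l \<in> closure A"
    unfolding closure_sequential using zs(1) \<sigma>(2) by (intro exI[of _ "zs \<circ> \<sigma>"]) simp
  moreover have "dist w l \<le> r"
    by (rule LIMSEQ_le_const2[OF tendsto_dist[OF tendsto_const \<sigma>(2)]]) (use zs(2) in simp)
  moreover have "dist (p i) ((f ^^ (L + i)) l) \<le> r" for i
  proof (rule LIMSEQ_le_const2)
    have "isCont (f ^^ (L + i)) l"
      using continuous_on_funpow[OF assms(2)] by (simp add: continuous_on_eq_continuous_at)
    then show "(\<lambda>k. dist (p i) ((f ^^ (L + i)) ((zs \<circ> \<sigma>) k))) \<longlonglongrightarrow> dist (p i) ((f ^^ (L + i)) l)"
      by (intro tendsto_intros isCont_tendsto_compose[OF _ \<sigma>(2)])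
    have "dist (p i) ((f ^^ (L + i)) ((zs \<circ> \<sigma>) k)) \<le> r" if "k \<ge> i" for k
      using zs(3)[of i "\<sigma> k"] seq_suble[OF \<sigma>(1), of k] that by simp
    then show "\<exists>N. \<forall>k\<ge>N. dist (p i) ((f ^^ (L + i)) ((zs \<circ> \<sigma>) k)) \<le> r" by blast
  qed
  ultimately show ?thesis by blast
qed

section \<open>Additively closed sets of natural numbers\<close>

lemma add_closed_multiple_mem:
  fixes S :: "nat set"
  assumes "\<forall>x\<in>S. \<forall>y\<in>S. x + y \<in> S" "y \<in> S" "t \<ge> 1"
  shows "t * y \<in> S"
  using assms(3)
proof (induction t rule: dec_induct)
  case (step t)
  then show ?case using assms(1,2) by (simp add: add.commute)
qed (use assms(2) in simp)

text \<open>d is the least positive difference of two elements of S.\<close>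
lemma add_closed_least_gap:
  fixes S :: "nat set"
  assumes add: "\<forall>x\<in>S. \<forall>y\<in>S. x + y \<in> S" and "s \<in> S" "s > 0"
  shows "\<exists>d>0. \<exists>b\<in>S. b + d \<in> S \<and> (\<forall>x\<in>S. d dvd x)"
proof -
  define gaps where "gaps = {d. d > 0 \<and> (\<exists>b\<in>S. b + d \<in> S)}"
  have "s \<in> gaps" using assms unfolding gaps_def by blast
  define d where "d = (LEAST d. d \<in> gaps)"
  have "d \<in> gaps" unfolding d_def using \<open>s \<in> gaps\<close> by (rule LeastI)
  then obtain b where b: "b \<in> S" "b + d \<in> S" "d > 0" unfolding gaps_def by blast
  have "d dvd x" if x: "x \<in> S" for x
  proof (rule ccontr)
    assume "\<not> d dvd x"
    then have r: "0 < x mod d" "x mod d < d" using b(3) by (simp_all add: dvd_eq_mod_eq_0)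
    have low: "x div d * (b + d) + b \<in> S"
    proof (cases "x div d = 0")
      case False
      then have "x div d * (b + d) \<in> S" using add_closed_multiple_mem[OF add b(2), of "x div d"] by simp
      then show ?thesis using add b(1) by blast
    qed (use b(1) in simp)
    have "x + (x div d + 1) * b \<in> S"
      using add_closed_multiple_mem[OF add b(1), of "x div d + 1"] add x by simp
    moreover have "x + (x div d + 1) * b = (x div d * (b + d) + b) + x mod d"
      by (simp add: algebra_simps)
    ultimately have "(x div d * (b + d) + b) + x mod d \<in> S" by metis
    then have "x mod d \<in> gaps" using low r(1) unfolding gaps_def by blast
    then have "d \<le> x mod d" unfolding d_def by (rule Least_le)
    with r(2) show False by simp
  qed
  with b show ?thesis by blast
qed

lemma add_closed_large_multiples:
  fixes S :: "nat set"
  assumes add: "\<forall>x\<in>S. \<forall>y\<in>S. x + y \<in> S" and b: "b \<in> S" "b + d \<in> S" "d dvd b" "b > 0"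
    and t: "t \<ge> (b div d) * (b div d)"
  shows "t * d \<in> S"
proof -
  define c where "c = b div d"
  have bc: "b = c * d" unfolding c_def using b(3) by simp
  have "c \<ge> 1" using bc b(4) by (cases c) auto
  have "c * c \<le> t" using t c_def by simp
  then have "c \<le> t div c" using \<open>c \<ge> 1\<close> by (metis div_le_mono nonzero_mult_div_cancel_right not_one_le_zero)
  moreover have "t mod c < c" using \<open>c \<ge> 1\<close> by simp
  ultimately have w: "t div c - t mod c \<ge> 1" by simp
  have "t = (t div c - t mod c) * c + t mod c * (c + 1)"
    using \<open>t mod c < c\<close> \<open>c \<le> t div c\<close> by (simp add: algebra_simps diff_mult_distrib)
  then have "t * d = (t div c - t mod c) * b + t mod c * (b + d)"
    using bc by (metis (no_types, lifting) add_mult_distrib mult.assoc mult_1)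
  moreover have "(t div c - t mod c) * b \<in> S" using add_closed_multiple_mem[OF add b(1) w] .
  moreover have "t mod c * (b + d) \<in> S" if "t mod c \<noteq> 0"
    using add_closed_multiple_mem[OF add b(2), of "t mod c"] that by simp
  ultimately show ?thesis using add by (cases "t mod c = 0") auto
qed

lemma add_closed_contains_large_multiples_Gcd:
  fixes S :: "nat set"
  assumes add: "\<forall>x\<in>S. \<forall>y\<in>S. x + y \<in> S" and "s \<in> S" "s > 0"
  shows "\<exists>N. \<forall>t\<ge>N. t * Gcd S \<in> S"
proof -
  obtain d b where d: "d > 0" "b \<in> S" "b + d \<in> S" "\<forall>x\<in>S. d dvd x"
    using add_closed_least_gap[OF assms] by blast
  have "Gcd S dvd d" using d(2,3) by (metis Gcd_dvd dvd_add_right_iff)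
  moreover have "d dvd Gcd S" using d(4) by (simp add: Gcd_greatest)
  ultimately have "d = Gcd S" using dvd_antisym by blast
  moreover have "t * d \<in> S" if "t \<ge> ((b + s) div d) * ((b + s) div d)" for t
  proof (rule add_closed_large_multiples[OF add _ _ _ _ that])
    show "b + s \<in> S" using add d(2) \<open>s \<in> S\<close> by blast
    have "(b + d) + s \<in> S" using add d(3) \<open>s \<in> S\<close> by blast
    then show "b + s + d \<in> S" by (simp add: ac_simps)
    show "d dvd b + s" using d(4) add d(2) \<open>s \<in> S\<close> by blast
  qed (use \<open>s > 0\<close> in simp)
  ultimately show ?thesis by blast
qed

lemma exists_ge_cong:
  assumes "m > 0"
  shows "\<exists>M\<ge>M0. [int M = k] (mod int m)"
proof -
  define M where "M = M0 + nat ((k - int M0) mod int m)"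
  have "[int M0 + (k - int M0) mod int m = int M0 + (k - int M0)] (mod int m)"
    by (intro cong_add cong_refl) simp
  then have "[int M = k] (mod int m)" using assms by (simp add: M_def)
  then show ?thesis unfolding M_def by (intro exI[of _ M]) (simp add: M_def)
qed

section \<open>Shadowing of eventually exact pseudo-orbits\<close>

definition s_limit_shadows :: "('a::metric_space \<Rightarrow> 'a) \<Rightarrow> real \<Rightarrow> real \<Rightarrow> bool" where
  "s_limit_shadows f \<delta> \<epsilon> \<longleftrightarrow> (\<forall>xs :: nat \<Rightarrow> 'a.
     (\<forall>i. dist (f (xs i)) (xs (Suc i)) \<le> \<delta>) \<and> (\<lambda>i. dist (f (xs i)) (xs (Suc i))) \<longlonglongrightarrow> 0
     \<longrightarrow> (\<exists>x. (\<forall>i. dist ((f ^^ i) x) (xs i) \<le> \<epsilon>) \<and> (\<lambda>i. dist ((f ^^ i) x) (xs i)) \<longlonglongrightarrow> 0))"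

lemma s_limit_shadowingD: "s_limit_shadowing f \<Longrightarrow> \<epsilon> > 0 \<Longrightarrow> \<exists>\<delta>>0. s_limit_shadows f \<delta> \<epsilon>"
  unfolding s_limit_shadowing_def s_limit_shadows_def by blast

definition eventually_exact_pseudo_orbit :: "('a::metric_space \<Rightarrow> 'a) \<Rightarrow> real \<Rightarrow> (nat \<Rightarrow> 'a) \<Rightarrow> bool" where
  "eventually_exact_pseudo_orbit f \<delta> \<xi> \<longleftrightarrow>
     (\<forall>i. dist (f (\<xi> i)) (\<xi> (Suc i)) \<le> \<delta>) \<and> (\<forall>\<^sub>F i in sequentially. f (\<xi> i) = \<xi> (Suc i))"

lemma eventually_exact_pseudo_orbit_orbit:
  "\<delta> \<ge> 0 \<Longrightarrow> eventually_exact_pseudo_orbit f \<delta> (\<lambda>i. (f ^^ (n + i)) x)"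
  by (simp add: eventually_exact_pseudo_orbit_def)

lemma eventually_exact_pseudo_orbit_seq_join:
  assumes "\<forall>i<k. dist (f (\<xi> i)) (\<xi> (Suc i)) \<le> \<delta>" "\<xi> k = \<zeta> 0" "eventually_exact_pseudo_orbit f \<delta> \<zeta>"
  shows "eventually_exact_pseudo_orbit f \<delta> (seq_join \<xi> k \<zeta>)"
  unfolding eventually_exact_pseudo_orbit_def
proof
  show "\<forall>i. dist (f (seq_join \<xi> k \<zeta> i)) (seq_join \<xi> k \<zeta> (Suc i)) \<le> \<delta>"
  proof
    fix i
    show "dist (f (seq_join \<xi> k \<zeta> i)) (seq_join \<xi> k \<zeta> (Suc i)) \<le> \<delta>"
      using seq_join_step[of \<xi> k \<zeta> i] assms unfolding eventually_exact_pseudo_orbit_def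
      by (cases "i < k") auto
  qed
  obtain B where B: "\<forall>i\<ge>B. f (\<zeta> i) = \<zeta> (Suc i)"
    using assms(3) unfolding eventually_exact_pseudo_orbit_def eventually_sequentially by blast
  have "f (seq_join \<xi> k \<zeta> i) = seq_join \<xi> k \<zeta> (Suc i)" if "i \<ge> k + B" for i
    using seq_join_step[of \<xi> k \<zeta> i] assms(2) B that by auto
  then show "\<forall>\<^sub>F i in sequentially. f (seq_join \<xi> k \<zeta> i) = seq_join \<xi> k \<zeta> (Suc i)"
    unfolding eventually_sequentially by blast
qed

lemma s_limit_shadows_eventually_exact:
  assumes "s_limit_shadows f \<delta> \<epsilon>" "eventually_exact_pseudo_orbit f \<delta> \<xi>"
  shows "\<exists>z. (\<forall>i. dist ((f ^^ i) z) (\<xi> i) \<le> \<epsilon>) \<and> (\<lambda>i. dist ((f ^^ i) z) (\<xi> i)) \<longlonglongrightarrow> 0"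
proof -
  have "(\<lambda>i. dist (f (\<xi> i)) (\<xi> (Suc i))) \<longlonglongrightarrow> 0"
    using assms(2) unfolding eventually_exact_pseudo_orbit_def
    by (intro tendsto_eventually) (auto elim: eventually_mono)
  then show ?thesis using assms unfolding s_limit_shadows_def eventually_exact_pseudo_orbit_def by blast
qed

lemma s_limit_shadows_excursion:
  assumes "s_limit_shadows f \<delta> \<epsilon>" "\<delta> \<ge> 0"
    and \<zeta>1: "\<forall>i<M. dist (f (\<zeta>1 i)) (\<zeta>1 (Suc i)) \<le> \<delta>" "\<zeta>1 0 = (f ^^ N) w" "\<zeta>1 M = (f ^^ N) x"
    and \<zeta>2: "\<forall>i<M'. dist (f (\<zeta>2 i)) (\<zeta>2 (Suc i)) \<le> \<delta>" "\<zeta>2 0 = (f ^^ (N + T)) x"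
      "\<zeta>2 M' = (f ^^ (N + M + T + M')) w"
  shows "\<exists>z. dist w z \<le> \<epsilon> \<and> (\<forall>i\<le>T. dist ((f ^^ (N + i)) x) ((f ^^ (N + M + i)) z) \<le> \<epsilon>)
           \<and> (\<lambda>s. dist ((f ^^ s) z) ((f ^^ s) w)) \<longlonglongrightarrow> 0"
proof -
  define S where "S = N + M + T + M'"
  define \<psi>3 where "\<psi>3 = seq_join \<zeta>2 M' (\<lambda>i. (f ^^ (S + i)) w)"
  define \<psi>2 where "\<psi>2 = seq_join (\<lambda>i. (f ^^ (N + i)) x) T \<psi>3"
  define \<psi>1 where "\<psi>1 = seq_join \<zeta>1 M \<psi>2"
  define \<xi> where "\<xi> = seq_join (\<lambda>i. (f ^^ (0 + i)) w) N \<psi>1"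
  have joins: "\<zeta>2 M' = (f ^^ (S + 0)) w" "(f ^^ (N + T)) x = \<psi>3 0" "\<zeta>1 M = \<psi>2 0"
    "(f ^^ (0 + N)) w = \<psi>1 0"
    using \<zeta>1 \<zeta>2 by (simp_all add: S_def \<psi>1_def \<psi>2_def \<psi>3_def seq_join_head)
  have orbit_steps: "\<forall>i<n. dist (f ((f ^^ (m + i)) y)) ((f ^^ (m + Suc i)) y) \<le> \<delta>" for n m y
    using \<open>\<delta> \<ge> 0\<close> by simp
  have "eventually_exact_pseudo_orbit f \<delta> \<psi>3"
    unfolding \<psi>3_def using \<zeta>2(1) joins(1) eventually_exact_pseudo_orbit_orbit[OF \<open>\<delta> \<ge> 0\<close>]
    by (rule eventually_exact_pseudo_orbit_seq_join)
  then have "eventually_exact_pseudo_orbit f \<delta> \<psi>2"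
    unfolding \<psi>2_def using orbit_steps joins(2) by (intro eventually_exact_pseudo_orbit_seq_join) auto
  then have "eventually_exact_pseudo_orbit f \<delta> \<psi>1"
    unfolding \<psi>1_def by (rule eventually_exact_pseudo_orbit_seq_join[where \<zeta> = \<psi>2, OF \<zeta>1(1) joins(3)])
  then have "eventually_exact_pseudo_orbit f \<delta> \<xi>"
    unfolding \<xi>_def using orbit_steps joins(4) by (intro eventually_exact_pseudo_orbit_seq_join) auto
  then obtain z where z: "\<forall>i. dist ((f ^^ i) z) (\<xi> i) \<le> \<epsilon>" "(\<lambda>i. dist ((f ^^ i) z) (\<xi> i)) \<longlonglongrightarrow> 0"
    using s_limit_shadows_eventually_exact[OF assms(1)] by blast
  have "\<xi> 0 = w" by (simp add: \<xi>_def seq_join_head)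
  then have "dist w z \<le> \<epsilon>" using z(1)[rule_format, of 0] by (simp add: dist_commute)
  moreover have "\<xi> (N + M + i) = (f ^^ (N + i)) x" if "i \<le> T" for i
    using seq_join_tail[of "\<lambda>i. (f ^^ (0 + i)) w" N \<psi>1 "M + i", OF joins(4)]
      seq_join_tail[of \<zeta>1 M \<psi>2 i, OF joins(3)] that
    by (simp add: \<xi>_def \<psi>1_def \<psi>2_def seq_join_head add.assoc)
  then have "dist ((f ^^ (N + i)) x) ((f ^^ (N + M + i)) z) \<le> \<epsilon>" if "i \<le> T" for i
    using z(1)[rule_format, of "N + M + i"] that by (simp add: dist_commute)
  moreover have "\<xi> (S + t) = (f ^^ (S + t)) w" for t
    using seq_join_tail[of "\<lambda>i. (f ^^ (0 + i)) w" N \<psi>1 "M + (T + (M' + t))", OF joins(4)]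
      seq_join_tail[of \<zeta>1 M \<psi>2 "T + (M' + t)", OF joins(3)]
      seq_join_tail[of "\<lambda>i. (f ^^ (N + i)) x" T \<psi>3 "M' + t", OF joins(2)]
      seq_join_tail[of \<zeta>2 M' "\<lambda>i. (f ^^ (S + i)) w" t, OF joins(1)]
    by (simp add: \<xi>_def \<psi>1_def \<psi>2_def \<psi>3_def S_def add.assoc)
  then have "\<xi> s = (f ^^ s) w" if "s \<ge> S" for s
    using that by (metis le_add_diff_inverse)
  then have "\<forall>\<^sub>F s in sequentially. dist ((f ^^ s) z) (\<xi> s) = dist ((f ^^ s) z) ((f ^^ s) w)"
    unfolding eventually_sequentially by (intro exI[of _ S]) auto
  with z(2) have "(\<lambda>s. dist ((f ^^ s) z) ((f ^^ s) w)) \<longlonglongrightarrow> 0"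
    by (rule Lim_transform_eventually)
  ultimately show ?thesis by blast
qed

section \<open>Chain components\<close>

locale chain_component =
  fixes f :: "'a::metric_space \<Rightarrow> 'a" and C :: "'a set"
  assumes compact_space: "compact (UNIV :: 'a set)"
    and continuous: "continuous_on UNIV f"
    and component: "C \<in> chain_components f"
begin

lemma uniformly_continuous: "uniformly_continuous_on UNIV f"
  using compact_uniformly_continuous[OF continuous compact_space] .

lemma component_nonempty: "C \<noteq> {}"
  and component_iff: "a \<in> C \<Longrightarrow> b \<in> C \<longleftrightarrow> chain_to f a b \<and> chain_to f b a"
proof -
  obtain c where c: "chain_to f c c" "C = {y \<in> CR f. chain_to f c y \<and> chain_to f y c}"
    using component unfolding chain_components_def CR_def by blast
  then show "C \<noteq> {}" by (auto simp: CR_def)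
  assume "a \<in> C"
  then show "b \<in> C \<longleftrightarrow> chain_to f a b \<and> chain_to f b a"
    using c by (auto simp: CR_def intro: chain_to_trans)
qed

lemma closed_component: "closed C"
proof -
  obtain a where a: "a \<in> C" using component_nonempty by blast
  have "l \<in> C" if "l \<in> closure C" for l
  proof -
    have approx: "\<forall>\<delta>>0. \<exists>q\<in>C. dist q l < \<delta>"
      using that by (auto simp: closure_approachable dist_commute)
    have "chain_to f a l"
      using approx a component_iff[OF a]
      by (intro chain_to_of_approximate_chains[OF uniformly_continuous])
         (metis chain_to_iff_chain_between dist_self)
    moreover have "chain_to f l a"
      using approx a component_iff[OF a]
      by (intro chain_to_of_approximate_chains[OF uniformly_continuous])
         (metis chain_to_iff_chain_between dist_self)
    ultimately show ?thesis using component_iff[OF a] by blast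
  qed
  then show ?thesis using closure_subset_eq by blast
qed

lemma compact_component: "compact C"
  using compact_Int_closed[OF compact_space closed_component] by simp

lemma component_image: "a \<in> C \<Longrightarrow> f a \<in> C"
proof -
  assume a: "a \<in> C"
  have "\<exists>p. dist p (f a) < \<delta> \<and> chain_between f \<delta> p a" if "\<delta> > 0" for \<delta>
  proof -
    obtain \<xi> k where \<xi>: "is_chain f (\<delta>/2) \<xi> k" "\<xi> 0 = a" "\<xi> k = a"
      using a component_iff[OF a] \<open>\<delta> > 0\<close> unfolding chain_to_def by (meson half_gt_zero)
    \<comment> \<open>the cycle run twice has length at least 2, so dropping its first point leaves a chain\<close>
    define \<xi>2 where "\<xi>2 = seq_join \<xi> k \<xi>"
    have \<xi>2: "is_chain f (\<delta>/2) \<xi>2 (k + k)" "\<xi>2 0 = a" "\<xi>2 (k + k) = a"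
      using \<xi> by (simp_all add: \<xi>2_def is_chain_seq_join seq_join_head seq_join_tail)
    have "1 < k + k" using \<xi>(1) by (simp add: is_chain_def)
    then have "chain_between f (\<delta>/2) (\<xi>2 1) a"
      using chain_between_suffix[OF \<xi>2(1)] \<xi>2(3) by metis
    moreover have "dist (\<xi>2 1) (f a) \<le> \<delta>/2"
      using \<xi>2 \<open>1 < k + k\<close> by (auto simp: is_chain_def dist_commute)
    ultimately show ?thesis
      using \<open>\<delta> > 0\<close> by (intro exI[of _ "\<xi>2 1"]) (auto intro: chain_between_mono)
  qed
  then have "chain_to f (f a) a"
    by (intro chain_to_of_approximate_chains[OF uniformly_continuous]) (metis dist_self)
  then show "f a \<in> C" using component_iff[OF a] chain_to_step chain_to_trans by blast
qed

lemma component_funpow: "a \<in> C \<Longrightarrow> (f ^^ n) a \<in> C"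
  by (induction n) (auto intro: component_image)

lemma chain_returning_points_near_component:
  assumes "a \<in> C" "\<eta> > 0"
  shows "\<exists>e>0. \<forall>q. chain_between f e a q \<and> chain_between f e q a \<longrightarrow> infdist q C < \<eta>"
proof (rule ccontr)
  assume "\<not> ?thesis"
  then have "\<forall>n. \<exists>q. chain_between f (inverse (Suc n)) a q \<and> chain_between f (inverse (Suc n)) q a
                 \<and> \<eta> \<le> infdist q C"
    by (metis not_le inverse_positive_iff_positive of_nat_0_less_iff zero_less_Suc)
  then obtain q where q: "\<And>n. chain_between f (inverse (Suc n)) a (q n)"
    "\<And>n. chain_between f (inverse (Suc n)) (q n) a" "\<And>n. \<eta> \<le> infdist (q n) C"
    by metis
  obtain l r where r: "strict_mono r" "(q \<circ> r) \<longlonglongrightarrow> l"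
    using compact_imp_seq_compact[OF compact_space] unfolding seq_compact_def by blast
  have mesh: "(\<lambda>n. inverse (real (Suc (r n)))) \<longlonglongrightarrow> 0"
    using LIMSEQ_subseq_LIMSEQ[OF LIMSEQ_inverse_real_of_nat r(1)] by (simp add: o_def)
  have approx: "\<exists>n. dist (q (r n)) l < \<delta> \<and> inverse (real (Suc (r n))) < \<delta>" if "\<delta> > 0" for \<delta>
  proof -
    have "\<forall>\<^sub>F n in sequentially. dist (q (r n)) l < \<delta> \<and> inverse (real (Suc (r n))) < \<delta>"
      using tendstoD[OF r(2) that] order_tendstoD(2)[OF mesh that]
      by (auto simp: o_def elim: eventually_elim2)
    then show ?thesis using eventually_happens'[OF sequentially_bot] by blast
  qed
  have near: "\<exists>n. dist (q (r n)) l < \<delta> \<and> chain_between f \<delta> a (q (r n)) \<and> chain_between f \<delta> (q (r n)) a"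
    if "\<delta> > 0" for \<delta>
    using approx[OF that] q(1,2) chain_between_mono less_imp_le by metis
  have "chain_to f a l" and "chain_to f l a"
    using near by (auto intro!: chain_to_of_approximate_chains[OF uniformly_continuous]) (metis dist_self)+
  then have "l \<in> C" using component_iff[OF assms(1)] by blast
  obtain n where "dist (q (r n)) l < \<eta>" using approx[OF assms(2)] by blast
  then have "infdist (q (r n)) C < \<eta>" using infdist_le[OF \<open>l \<in> C\<close>] by (meson le_less_trans)
  with q(3) show False by (meson not_le)
qed

definition component_chain :: "real \<Rightarrow> (nat \<Rightarrow> 'a) \<Rightarrow> nat \<Rightarrow> 'a \<Rightarrow> 'a \<Rightarrow> bool" where
  "component_chain g \<xi> k a b \<longleftrightarrow> is_chain f g \<xi> k \<and> (\<forall>i\<le>k. \<xi> i \<in> C) \<and> \<xi> 0 = a \<and> \<xi> k = b"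

text \<open>Each point of a fine chain from a to b lies on a fine cycle through a, hence close to C, so
  the chain can be pushed into C at a small cost controlled by uniform continuity.\<close>
lemma component_chain_exists:
  assumes "a \<in> C" "b \<in> C" "g > 0"
  shows "\<exists>\<xi> k. component_chain g \<xi> k a b"
proof -
  obtain \<eta> where \<eta>: "\<eta> > 0" "\<eta> \<le> g/3" "\<forall>x y. dist x y < \<eta> \<longrightarrow> dist (f x) (f y) \<le> g/3"
    using uniformly_continuous_modulus[OF uniformly_continuous] assms(3) by (metis divide_pos_pos zero_less_numeral)
  obtain e where e: "e > 0" "\<And>q. chain_between f e a q \<Longrightarrow> chain_between f e q a \<Longrightarrow> infdist q C < \<eta>"
    using chain_returning_points_near_component[OF assms(1) \<eta>(1)] by blast
  define e' where "e' = min e (g/3)"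
  have "e' > 0" using e assms by (simp add: e'_def)
  obtain \<xi> k where \<xi>: "is_chain f e' \<xi> k" "\<xi> 0 = a" "\<xi> k = b"
    using component_iff[OF assms(1)] assms(2) \<open>e' > 0\<close> unfolding chain_to_def by blast
  have returning: "chain_between f e' b a"
    using component_iff[OF assms(1)] assms(2) \<open>e' > 0\<close> chain_to_iff_chain_between by blast
  have "\<exists>c\<in>C. dist (\<xi> i) c < \<eta> \<and> (i = 0 \<longrightarrow> c = a) \<and> (i = k \<longrightarrow> c = b)" if "i \<le> k" for i
  proof (cases "i = 0")
    case True then show ?thesis using assms \<xi> \<eta>(1) by force
  next
    case False
    have "chain_between f e' (\<xi> i) a"
      using chain_between_suffix[OF \<xi>(1), of i] chain_between_trans[of f e' "\<xi> i" b a] returning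
        \<xi>(3) \<open>i \<le> k\<close>
      by (cases "i = k") auto
    moreover have "chain_between f e' a (\<xi> i)"
      using chain_between_prefix[OF \<xi>(1)] False \<open>i \<le> k\<close> \<xi>(2) by auto
    ultimately have "infdist (\<xi> i) C < \<eta>"
      using e(2) chain_between_mono[of f e'] by (simp add: e'_def)
    then obtain c where "c \<in> C" "dist (\<xi> i) c < \<eta>" using component_nonempty infdist_lessE by blast
    then show ?thesis using assms(2) \<xi>(3) \<eta>(1) False by (cases "i = k") auto
  qed
  then obtain c where c: "\<forall>i\<le>k. c i \<in> C \<and> dist (\<xi> i) (c i) < \<eta> \<and> (i = 0 \<longrightarrow> c i = a) \<and> (i = k \<longrightarrow> c i = b)"
    by metis
  have "is_chain f (g/3 + e' + \<eta>) c k"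
    using is_chain_perturb[OF \<xi>(1) _ \<eta>(3)] c by blast
  then have "is_chain f g c k"
    by (rule is_chain_mono) (use \<eta>(2) in \<open>simp add: e'_def\<close>)
  then show ?thesis using c unfolding component_chain_def by blast
qed

section \<open>Phases and connecting chains\<close>

lemma component_chain_ends: "component_chain g \<xi> k a b \<Longrightarrow> a \<in> C \<and> b \<in> C"
  unfolding component_chain_def by (metis le0 order_refl)

lemma component_chain_join:
  "component_chain g \<xi> k a b \<Longrightarrow> component_chain g \<zeta> l b c \<Longrightarrow>
    component_chain g (seq_join \<xi> k \<zeta>) (k + l) a c"
  unfolding component_chain_def
  by (auto simp: is_chain_seq_join seq_join_head seq_join_tail seq_join_def)

lemma period_dvd_cycle: "component_chain g \<xi> k a a \<Longrightarrow> period f C g dvd k"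
  unfolding period_def component_chain_def by (rule Gcd_dvd) auto

lemma period_pos:
  assumes "g > 0"
  shows "period f C g > 0"
proof -
  obtain a where "a \<in> C" using component_nonempty by blast
  then obtain \<xi> k where \<xi>: "component_chain g \<xi> k a a" using component_chain_exists assms by blast
  then have "k \<noteq> 0" by (auto simp: component_chain_def is_chain_def)
  then show ?thesis using period_dvd_cycle[OF \<xi>] by (metis gr0I dvd_0_left)
qed

lemma component_chain_length_cong:
  assumes "g > 0" "component_chain g \<xi> k a b" "component_chain g \<zeta> l a b"
  shows "[k = l] (mod period f C g)"
proof -
  obtain \<rho> r where \<rho>: "component_chain g \<rho> r b a"
    using component_chain_exists component_chain_ends[OF assms(2)] assms(1) by blast
  have "[k + r = 0] (mod period f C g)" "[l + r = 0] (mod period f C g)"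
    using period_dvd_cycle[OF component_chain_join[OF assms(2) \<rho>]]
      period_dvd_cycle[OF component_chain_join[OF assms(3) \<rho>]]
    by (simp_all add: cong_0_iff)
  then show ?thesis by (meson cong_add_rcancel_nat cong_sym cong_trans)
qed

text \<open>The length of an arbitrary chain in C from a to b; by component_chain_length_cong it is
  determined modulo the period.\<close>
definition phase :: "real \<Rightarrow> 'a \<Rightarrow> 'a \<Rightarrow> int" where
  "phase g a b = int (SOME k. \<exists>\<xi>. component_chain g \<xi> k a b)"

lemma phase_nonneg: "phase g a b \<ge> 0"
  by (simp add: phase_def)

lemma component_chain_of_phase:
  assumes "g > 0" "a \<in> C" "b \<in> C"
  shows "\<exists>\<xi>. component_chain g \<xi> (nat (phase g a b)) a b"
proof -
  have "\<exists>k \<xi>. component_chain g \<xi> k a b" using component_chain_exists[OF assms(2,3,1)] by blast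
  from someI_ex[OF this] show ?thesis by (simp add: phase_def)
qed

lemma component_chain_phase:
  assumes "g > 0" "component_chain g \<xi> k a b"
  shows "[int k = phase g a b] (mod int (period f C g))"
proof -
  obtain \<zeta> where "component_chain g \<zeta> (nat (phase g a b)) a b"
    using component_chain_of_phase[OF assms(1)] component_chain_ends[OF assms(2)] by blast
  from component_chain_length_cong[OF assms this] show ?thesis
    by (metis cong_int_iff phase_nonneg int_nat_eq)
qed

lemma phase_add:
  assumes "g > 0" "a \<in> C" "b \<in> C" "c \<in> C"
  shows "[phase g a c = phase g a b + phase g b c] (mod int (period f C g))"
proof -
  obtain \<xi> \<zeta> where "component_chain g \<xi> (nat (phase g a b)) a b" "component_chain g \<zeta> (nat (phase g b c)) b c"
    using component_chain_of_phase assms by blast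
  from component_chain_phase[OF assms(1) component_chain_join[OF this]] show ?thesis
    by (simp add: phase_nonneg cong_sym)
qed

lemma phase_self:
  assumes "g > 0" "a \<in> C"
  shows "[phase g a a = 0] (mod int (period f C g))"
proof -
  obtain \<xi> where "component_chain g \<xi> (nat (phase g a a)) a a"
    using component_chain_of_phase assms by blast
  from period_dvd_cycle[OF this] show ?thesis
    by (metis cong_0_iff int_dvd_int_iff int_nat_eq phase_nonneg)
qed

lemma phase_swap:
  assumes "g > 0" "a \<in> C" "b \<in> C"
  shows "[phase g b a = - phase g a b] (mod int (period f C g))"
  using cong_trans[OF cong_sym[OF phase_add[OF assms(1,2,3,2)]] phase_self[OF assms(1,2)]]
  by (simp add: cong_iff_dvd_diff algebra_simps)

lemma phase_funpow:
  assumes "g > 0" "a \<in> C"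
  shows "[phase g a ((f ^^ k) a) = int k] (mod int (period f C g))"
proof (cases "k = 0")
  case True then show ?thesis using phase_self[OF assms] by simp
next
  case False
  then have "component_chain g (\<lambda>i. (f ^^ i) a) k a ((f ^^ k) a)"
    unfolding component_chain_def is_chain_def using assms component_funpow by auto
  from component_chain_phase[OF assms(1) this] show ?thesis by (rule cong_sym)
qed

lemma phase_shift:
  assumes "g > 0" "a \<in> C" "b \<in> C"
  shows "[phase g ((f ^^ i) a) ((f ^^ j) b) = phase g a b + int j - int i] (mod int (period f C g))"
proof -
  have ia: "(f ^^ i) a \<in> C" and jb: "(f ^^ j) b \<in> C" using assms component_funpow by auto
  have "[phase g ((f ^^ i) a) ((f ^^ j) b) = phase g ((f ^^ i) a) a + (phase g a b + phase g b ((f ^^ j) b))]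
      (mod int (period f C g))"
    using cong_trans[OF phase_add[OF assms(1) ia assms(2) jb] cong_add[OF cong_refl phase_add[OF assms jb]]] .
  also have "[phase g ((f ^^ i) a) a + (phase g a b + phase g b ((f ^^ j) b))
      = - int i + (phase g a b + int j)] (mod int (period f C g))"
  proof (intro cong_add cong_refl)
    show "[phase g ((f ^^ i) a) a = - int i] (mod int (period f C g))"
      using cong_trans[OF phase_swap[OF assms(1,2) ia] phase_funpow[OF assms(1,2), THEN cong_minus_minus_iff[THEN iffD2]]] .
    show "[phase g b ((f ^^ j) b) = int j] (mod int (period f C g))"
      using phase_funpow[OF assms(1,3)] .
  qed
  finally show ?thesis by (simp add: algebra_simps)
qed

lemma phase_near:
  assumes "g > 0" "a \<in> C" "b \<in> C" "dist (f a) (f b) \<le> g"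
  shows "[phase g a b = 0] (mod int (period f C g))"
proof -
  have fb: "f b \<in> C" using component_image assms by auto
  have "component_chain g (\<lambda>i. if i = 0 then a else f b) 1 a (f b)"
    unfolding component_chain_def is_chain_def using assms fb by auto
  then have "[phase g a (f b) = 1] (mod int (period f C g))"
    using component_chain_phase[OF assms(1)] cong_sym by (metis of_nat_1)
  moreover have "[phase g a (f b) = phase g a b + 1] (mod int (period f C g))"
  proof -
    have "[phase g b (f b) = 1] (mod int (period f C g))" using phase_funpow[OF assms(1,3), of 1] by simp
    then show ?thesis using cong_trans[OF phase_add[OF assms(1-3) fb] cong_add[OF cong_refl]] by blast
  qed
  ultimately show ?thesis
    by (metis add_0 cong_add_rcancel cong_sym cong_trans)
qed

lemma phase_change_base:
  assumes "g > 0" "p \<in> C" "a \<in> C" "y \<in> C" "[phase g p a = 0] (mod int (period f C g))"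
  shows "[phase g p y = phase g a y] (mod int (period f C g))"
  using cong_trans[OF phase_add[OF assms(1-4)] cong_add[OF assms(5) cong_refl]] by simp

lemma rel_delta_iff_phase:
  assumes "g > 0"
  shows "rel_delta f C g a b \<longleftrightarrow> a \<in> C \<and> b \<in> C \<and> [phase g a b = 0] (mod int (period f C g))"
proof
  assume "rel_delta f C g a b"
  then obtain \<xi> k where \<xi>: "component_chain g \<xi> k a b" "period f C g dvd k"
    unfolding rel_delta_def component_chain_def by blast
  then show "a \<in> C \<and> b \<in> C \<and> [phase g a b = 0] (mod int (period f C g))"
    using component_chain_ends component_chain_phase[OF assms \<xi>(1)]
    by (metis cong_0_iff cong_sym cong_trans int_dvd_int_iff)
next
  assume ab: "a \<in> C \<and> b \<in> C \<and> [phase g a b = 0] (mod int (period f C g))"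
  then obtain \<xi> where "component_chain g \<xi> (nat (phase g a b)) a b"
    using component_chain_of_phase assms by blast
  moreover have "period f C g dvd nat (phase g a b)"
    using ab by (metis cong_0_iff int_dvd_int_iff int_nat_eq phase_nonneg)
  ultimately show "rel_delta f C g a b"
    using ab unfolding rel_delta_def component_chain_def by blast
qed

lemma class_delta_eq:
  assumes "g > 0" "D \<in> classes f C" "a \<in> D"
  shows "class_delta f C D g = {y \<in> C. [phase g a y = 0] (mod int (period f C g))}"
proof -
  obtain d where d: "d \<in> C" "D = {y \<in> C. rel_C f C d y}" using assms(2) unfolding classes_def by blast
  have "a \<in> C" "[phase g d a = 0] (mod int (period f C g))"
    using assms d rel_delta_iff_phase unfolding rel_C_def by auto
  note base_a = phase_change_base[OF assms(1) d(1) this(1) _ this(2)]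
  define E0 where "E0 = {y. rel_delta f C g a y}"
  have E0: "E0 = {y \<in> C. [phase g a y = 0] (mod int (period f C g))}"
    unfolding E0_def using rel_delta_iff_phase[OF assms(1)] \<open>a \<in> C\<close> by auto
  have "E0 \<in> classes_delta f C g" using \<open>a \<in> C\<close> unfolding E0_def classes_delta_def by blast
  moreover have "D \<subseteq> E0"
  proof
    fix y assume "y \<in> D"
    then have "y \<in> C" "[phase g d y = 0] (mod int (period f C g))"
      using d rel_delta_iff_phase[OF assms(1)] assms(1) unfolding rel_C_def by auto
    then show "y \<in> E0" using E0 base_a cong_trans cong_sym by blast
  qed
  moreover have "E = E0" if E: "E \<in> classes_delta f C g \<and> D \<subseteq> E" for E
  proof -
    obtain p where p: "p \<in> C" "E = {y. rel_delta f C g p y}" using E unfolding classes_delta_def by blast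
    have "[phase g p a = 0] (mod int (period f C g))"
      using assms(3) E p rel_delta_iff_phase[OF assms(1)] by auto
    note base_p = phase_change_base[OF assms(1) p(1) \<open>a \<in> C\<close> _ this]
    have "y \<in> E \<longleftrightarrow> y \<in> E0" for y
    proof (cases "y \<in> C")
      case True
      have "[phase g p y = 0] (mod int (period f C g)) \<longleftrightarrow> [phase g a y = 0] (mod int (period f C g))"
        using base_p[OF True] cong_sym cong_trans by metis
      then show ?thesis using True p rel_delta_iff_phase[OF assms(1)] E0 by auto
    next
      case False
      then show ?thesis using p rel_delta_iff_phase[OF assms(1)] E0 by auto
    qed
    then show ?thesis by blast
  qed
  ultimately have "class_delta f C D g = E0"
    unfolding class_delta_def by (intro the_equality) blast+
  with E0 show ?thesis by simp
qed

lemma classes_nonemptyE: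
  assumes "D \<in> classes f C"
  obtains a where "a \<in> C" "a \<in> D"
proof -
  obtain a where "a \<in> C" "D = {y \<in> C. rel_C f C a y}" using assms unfolding classes_def by blast
  moreover have "rel_C f C a a" using \<open>a \<in> C\<close> rel_delta_iff_phase phase_self unfolding rel_C_def by blast
  ultimately show thesis using that by blast
qed

lemma Vs_eventually_tracked:
  assumes "g > 0" "D \<in> classes f C" "x \<in> Vs f C D" "\<eta> > 0"
  shows "\<forall>\<^sub>F s in sequentially. \<exists>d\<in>class_delta f C D g. dist ((f ^^ s) x) ((f ^^ s) d) < \<eta>"
proof -
  obtain a where "a \<in> C" "a \<in> D" using classes_nonemptyE[OF assms(2)] .
  then have ne: "class_delta f C D g \<noteq> {}"
    using class_delta_eq[OF assms(1,2)] phase_self[OF assms(1)] by blast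
  have "(\<lambda>s. infdist ((f ^^ s) x) ((f ^^ s) ` class_delta f C D g)) \<longlonglongrightarrow> 0"
    using assms(1,3) unfolding Vs_def by blast
  from order_tendstoD(2)[OF this assms(4)] show ?thesis
    by eventually_elim (use ne in \<open>auto elim: infdist_lessE\<close>)
qed

lemma phase_class_delta_funpow:
  assumes "g > 0" "D \<in> classes f C" "D' \<in> classes f C" "a \<in> D" "a' \<in> D'" "a \<in> C" "a' \<in> C"
    and "d \<in> class_delta f C D g" "d' \<in> class_delta f C D' g"
  shows "[phase g ((f ^^ i) d) ((f ^^ j) d') = phase g a a' + int j - int i] (mod int (period f C g))"
proof -
  have d: "d \<in> C" "[phase g a d = 0] (mod int (period f C g))"
    and d': "d' \<in> C" "[phase g a' d' = 0] (mod int (period f C g))"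
    using assms(8,9) class_delta_eq[OF assms(1,2,4)] class_delta_eq[OF assms(1,3,5)] by auto
  have "[phase g d d' = phase g a d'] (mod int (period f C g))"
    using phase_change_base[OF assms(1,6) d(1) d'(1) d(2)] by (rule cong_sym)
  also have "[phase g a d' = phase g a a' + phase g a' d'] (mod int (period f C g))"
    using phase_add[OF assms(1,6,7) d'(1)] .
  also have "[phase g a a' + phase g a' d' = phase g a a' + 0] (mod int (period f C g))"
    using d'(2) by (intro cong_add cong_refl)
  finally have "[phase g d d' = phase g a a'] (mod int (period f C g))" by simp
  then have "[phase g d d' + int j - int i = phase g a a' + int j - int i] (mod int (period f C g))"
    by (rule cong_diff[OF cong_add[OF _ cong_refl] cong_refl])
  with phase_shift[OF assms(1) d(1) d'(1)] show ?thesis by (rule cong_trans)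
qed

lemma cycles_of_large_multiples_of_period:
  assumes "g > 0" "a \<in> C"
  shows "\<exists>N. \<forall>t\<ge>N. \<exists>\<xi>. component_chain g \<xi> (t * period f C g) a a"
proof -
  define S where "S = {k. \<exists>\<xi>. component_chain g \<xi> k a a}"
  have add: "\<forall>x\<in>S. \<forall>y\<in>S. x + y \<in> S" unfolding S_def using component_chain_join by blast
  obtain \<xi>0 k0 where "component_chain g \<xi>0 k0 a a" using component_chain_exists assms by blast
  then have "k0 \<in> S" "k0 > 0" unfolding S_def by (auto simp: component_chain_def is_chain_def)
  have "Gcd S dvd k" if "k \<in> {k. \<exists>\<xi>. is_chain f g \<xi> k \<and> (\<forall>i\<le>k. \<xi> i \<in> C) \<and> \<xi> 0 = \<xi> k}" for k
  proof -
    from that obtain \<xi> where "is_chain f g \<xi> k" "\<forall>i\<le>k. \<xi> i \<in> C" "\<xi> 0 = \<xi> k" by blast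
    then have cyc: "component_chain g \<xi> k (\<xi> 0) (\<xi> 0)" and "\<xi> 0 \<in> C"
      unfolding component_chain_def by auto
    define c where "c = \<xi> 0"
    obtain \<alpha> \<rho> \<beta> \<sigma> where "component_chain g \<rho> \<alpha> a c" "component_chain g \<sigma> \<beta> c a"
      using component_chain_exists assms \<open>\<xi> 0 \<in> C\<close> unfolding c_def by metis
    then have "\<alpha> + \<beta> \<in> S" "\<alpha> + (k + \<beta>) \<in> S"
      unfolding S_def using component_chain_join cyc unfolding c_def by blast+
    then have "Gcd S dvd \<alpha> + \<beta>" "Gcd S dvd (\<alpha> + \<beta>) + k" by (simp_all add: Gcd_dvd ac_simps)
    then show "Gcd S dvd k" by (simp add: dvd_add_right_iff)
  qed
  then have "Gcd S dvd period f C g" unfolding period_def by (rule Gcd_greatest)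
  moreover have "period f C g dvd Gcd S"
    unfolding S_def using period_dvd_cycle by (blast intro: Gcd_greatest)
  ultimately have "Gcd S = period f C g" using dvd_antisym by blast
  with add_closed_contains_large_multiples_Gcd[OF add \<open>k0 \<in> S\<close> \<open>k0 > 0\<close>] show ?thesis
    unfolding S_def by auto
qed

lemma component_chains_of_large_length:
  assumes "g > 0" "a \<in> C" "b \<in> C"
  shows "\<forall>\<^sub>F M in sequentially.
    [int M = phase g a b] (mod int (period f C g)) \<longrightarrow> (\<exists>\<xi>. component_chain g \<xi> M a b)"
proof -
  define l where "l = nat (phase g a b)"
  obtain \<rho> where \<rho>: "component_chain g \<rho> l a b" using component_chain_of_phase assms l_def by blast
  obtain N where N: "\<forall>t\<ge>N. \<exists>\<xi>. component_chain g \<xi> (t * period f C g) a a"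
    using cycles_of_large_multiples_of_period[OF assms(1,2)] by blast
  have "\<exists>\<xi>. component_chain g \<xi> M a b"
    if M: "M \<ge> l + N * period f C g" "[int M = phase g a b] (mod int (period f C g))" for M
  proof -
    have "[M = l] (mod period f C g)" using M(2) by (simp add: l_def phase_nonneg flip: cong_int_iff)
    then have "period f C g dvd M - l" using M(1) by (simp add: cong_altdef_nat cong_sym_eq)
    then obtain t where t: "M - l = t * period f C g" by (metis dvd_def mult.commute)
    then have "N * period f C g \<le> t * period f C g" using M(1) by linarith
    then have "t \<ge> N" using period_pos[OF assms(1)] by simp
    then obtain \<xi> where "component_chain g \<xi> (t * period f C g) a a" using N by blast
    moreover have "t * period f C g + l = M" using t M(1) by linarith
    ultimately show ?thesis using component_chain_join[OF _ \<rho>] by metis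
  qed
  then show ?thesis unfolding eventually_sequentially by blast
qed

lemma phase_near_ends:
  assumes "g > 0" "a \<in> C" "b \<in> C" "p \<in> C" "q \<in> C"
    and "dist (f p) (f a) \<le> g" "dist (f b) (f q) \<le> g"
  shows "[phase g p q = phase g a b] (mod int (period f C g))"
proof -
  have "[phase g p q = phase g p a + (phase g a b + phase g b q)] (mod int (period f C g))"
    using cong_trans[OF phase_add[OF assms(1,4,2,5)] cong_add[OF cong_refl phase_add[OF assms(1,2,3,5)]]] .
  also have "[phase g p a + (phase g a b + phase g b q) = 0 + (phase g a b + 0)] (mod int (period f C g))"
    using phase_near assms by (intro cong_add cong_refl) auto
  finally show ?thesis by simp
qed

text \<open>Only the finitely many pairs of a net of C need long chains; nearby endpoints are then
  reached by moving the two ends of such a chain.\<close>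
lemma uniform_connecting_chains:
  assumes "g > 0"
  obtains \<eta> where "\<eta> > 0" and "\<forall>\<^sub>F M in sequentially. \<forall>a\<in>C. \<forall>b\<in>C. \<forall>s t.
    [int M = phase g a b] (mod int (period f C g)) \<longrightarrow> dist s a < \<eta> \<longrightarrow> dist t b < \<eta> \<longrightarrow>
    (\<exists>\<zeta>. is_chain f (3 * g) \<zeta> M \<and> \<zeta> 0 = s \<and> \<zeta> M = t)"
proof -
  obtain \<eta>' where \<eta>': "\<eta>' > 0" "\<eta>' \<le> g" "\<forall>x y. dist x y < \<eta>' \<longrightarrow> dist (f x) (f y) \<le> g"
    using uniformly_continuous_modulus[OF uniformly_continuous assms assms] by blast
  define \<eta> where "\<eta> = \<eta>' / 2"
  have \<eta>: "\<eta> > 0" "2 * \<eta> \<le> g" "\<forall>x y. dist x y < 2 * \<eta> \<longrightarrow> dist (f x) (f y) \<le> g"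
    using \<eta>' by (simp_all add: \<eta>_def)
  have "\<exists>P. P \<subseteq> C \<and> finite P \<and> C \<subseteq> (\<Union>p\<in>P. ball p \<eta>)"
    by (rule compactE_image[OF compact_component, of C "\<lambda>p. ball p \<eta>"]) (use \<eta>(1) in auto)
  then obtain P where P: "P \<subseteq> C" "finite P" "C \<subseteq> (\<Union>p\<in>P. ball p \<eta>)" by blast
  have "\<forall>\<^sub>F M in sequentially. \<forall>p\<in>P. \<forall>q\<in>P.
      [int M = phase g p q] (mod int (period f C g)) \<longrightarrow> (\<exists>\<xi>. component_chain g \<xi> M p q)"
    using P(1,2) component_chains_of_large_length[OF assms] by (intro eventually_ball_finite ballI) auto
  then have "\<forall>\<^sub>F M in sequentially. \<forall>a\<in>C. \<forall>b\<in>C. \<forall>s t.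
    [int M = phase g a b] (mod int (period f C g)) \<longrightarrow> dist s a < \<eta> \<longrightarrow> dist t b < \<eta> \<longrightarrow>
    (\<exists>\<zeta>. is_chain f (3 * g) \<zeta> M \<and> \<zeta> 0 = s \<and> \<zeta> M = t)"
  proof eventually_elim
    case (elim M)
    show ?case
    proof (intro ballI allI impI)
      fix a b s t
      assume ab: "a \<in> C" "b \<in> C" and M: "[int M = phase g a b] (mod int (period f C g))"
        and st: "dist s a < \<eta>" "dist t b < \<eta>"
      obtain p q where pq: "p \<in> P" "q \<in> P" "dist p a < \<eta>" "dist q b < \<eta>"
      proof -
        obtain p q where "p \<in> P" "a \<in> ball p \<eta>" "q \<in> P" "b \<in> ball q \<eta>" using P(3) ab by blast
        then show thesis using that by (simp add: dist_commute)
      qed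
      have "dist (f p) (f a) \<le> g" "dist (f b) (f q) \<le> g"
        using \<eta>(3)[rule_format, of p a] \<eta>(3)[rule_format, of b q] pq(3,4) \<eta>(1) by (auto simp: dist_commute)
      from phase_near_ends[OF assms ab _ _ this] pq(1,2) P(1)
      have "[int M = phase g p q] (mod int (period f C g))"
        using cong_trans[OF M cong_sym] by blast
      then obtain \<rho> where \<rho>: "component_chain g \<rho> M p q" using elim pq(1,2) by blast
      have "dist p s < 2 * \<eta>" "dist q t < 2 * \<eta>"
        using pq st dist_triangle[of p s a] dist_triangle[of q t b] by (simp_all add: dist_commute)
      then have "\<forall>i\<le>M. dist (\<rho> i) ((\<rho>(0 := s, M := t)) i) < 2 * \<eta>"
        using \<rho> \<eta>(1) unfolding component_chain_def by auto
      moreover have "is_chain f g \<rho> M" using \<rho> by (simp add: component_chain_def)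
      ultimately have "is_chain f (g + g + 2 * \<eta>) (\<rho>(0 := s, M := t)) M"
        using is_chain_perturb \<eta>(3) by blast
      then have "is_chain f (3 * g) (\<rho>(0 := s, M := t)) M" using \<eta>(2) by (auto elim: is_chain_mono)
      then show "\<exists>\<zeta>. is_chain f (3 * g) \<zeta> M \<and> \<zeta> 0 = s \<and> \<zeta> M = t"
        by (intro exI[of _ "\<rho>(0 := s, M := t)"]) (auto simp: is_chain_def)
    qed
  qed
  with \<eta>(1) show ?thesis by (rule that)
qed

lemma connecting_chain_between_class_orbits:
  assumes "g > 0" "D \<in> classes f C" "E \<in> classes f C" "a \<in> C" "a \<in> D" "b \<in> C" "b \<in> E"
    and "d \<in> class_delta f C D g" "e \<in> class_delta f C E g"
    and connect: "\<forall>a\<in>C. \<forall>b\<in>C. \<forall>s t. [int M = phase g a b] (mod int (period f C g)) \<longrightarrow>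
      dist s a < \<eta> \<longrightarrow> dist t b < \<eta> \<longrightarrow> (\<exists>\<zeta>. is_chain f \<delta> \<zeta> M \<and> \<zeta> 0 = s \<and> \<zeta> M = t)"
    and "[int M + int i = phase g a b + int j] (mod int (period f C g))"
    and "dist s ((f ^^ i) d) < \<eta>" "dist t ((f ^^ j) e) < \<eta>"
  shows "\<exists>\<zeta>. is_chain f \<delta> \<zeta> M \<and> \<zeta> 0 = s \<and> \<zeta> M = t"
proof -
  have "d \<in> C" "e \<in> C"
    using assms(8,9) class_delta_eq[OF assms(1,2,5)] class_delta_eq[OF assms(1,3,7)] by auto
  have "[int M = phase g a b + int j - int i] (mod int (period f C g))"
    using cong_diff[OF assms(11) cong_refl[of "int i"]] by simp
  then have "[int M = phase g ((f ^^ i) d) ((f ^^ j) e)] (mod int (period f C g))"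
    using cong_trans[OF _ cong_sym[OF phase_class_delta_funpow[OF assms(1,2,3,5,7,4,6,8,9)]]] by blast
  then show ?thesis
    using connect component_funpow[OF \<open>d \<in> C\<close>] component_funpow[OF \<open>e \<in> C\<close>] assms(12,13) by blast
qed

lemma finite_horizon_tracking:
  assumes "s_limit_shadowing f" "D \<in> classes f C" "E \<in> classes f C" "finite J"
    and "\<forall>j\<in>J. x j \<in> Vs f C D" "\<forall>j\<in>J. w j \<in> Vs f C E" "\<epsilon> > 0"
  shows "\<exists>K L. \<forall>j\<in>J. \<forall>T. \<exists>z\<in>Vs f C E. dist (w j) z \<le> \<epsilon> \<and>
           (\<forall>i\<le>T. dist ((f ^^ (K + i)) (x j)) ((f ^^ (L + i)) z) \<le> \<epsilon>)"
proof -
  obtain \<delta> where \<delta>: "\<delta> > 0" "s_limit_shadows f \<delta> \<epsilon>" using s_limit_shadowingD assms(1,7) by blast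
  define g where "g = \<delta> / 3"
  have g: "g > 0" "3 * g = \<delta>" using \<delta>(1) by (simp_all add: g_def)
  obtain \<eta> M0 where \<eta>: "\<eta> > 0" and connect: "\<And>M. M \<ge> M0 \<Longrightarrow> \<forall>a\<in>C. \<forall>b\<in>C. \<forall>s t.
      [int M = phase g a b] (mod int (period f C g)) \<longrightarrow> dist s a < \<eta> \<longrightarrow> dist t b < \<eta> \<longrightarrow>
      (\<exists>\<zeta>. is_chain f \<delta> \<zeta> M \<and> \<zeta> 0 = s \<and> \<zeta> M = t)"
    using uniform_connecting_chains[OF g(1)] unfolding g(2) eventually_sequentially by metis
  obtain a b where a: "a \<in> C" "a \<in> D" and b: "b \<in> C" "b \<in> E"
    using classes_nonemptyE assms(2,3) by metis
  have "\<forall>\<^sub>F s in sequentially. \<forall>j\<in>J.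
      (\<exists>d\<in>class_delta f C D g. dist ((f ^^ s) (x j)) ((f ^^ s) d) < \<eta>) \<and>
      (\<exists>e\<in>class_delta f C E g. dist ((f ^^ s) (w j)) ((f ^^ s) e) < \<eta>)"
    using assms(2-6) Vs_eventually_tracked[OF g(1)] \<eta>
    by (intro eventually_ball_finite ballI eventually_conj) auto
  then obtain N where N: "\<And>s j. s \<ge> N \<Longrightarrow> j \<in> J \<Longrightarrow>
      (\<exists>d\<in>class_delta f C D g. dist ((f ^^ s) (x j)) ((f ^^ s) d) < \<eta>) \<and>
      (\<exists>e\<in>class_delta f C E g. dist ((f ^^ s) (w j)) ((f ^^ s) e) < \<eta>)"
    unfolding eventually_sequentially by blast
  obtain M where M: "M \<ge> M0" "[int M = phase g b a] (mod int (period f C g))"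
    using exists_ge_cong period_pos[OF g(1)] by blast
  have "[phase g a b + int M = 0] (mod int (period f C g))"
    using cong_add[OF cong_refl[of "phase g a b"] cong_trans[OF M(2) phase_swap[OF g(1) a(1) b(1)]]] by simp
  have "\<exists>z\<in>Vs f C E. dist (w j) z \<le> \<epsilon> \<and> (\<forall>i\<le>T. dist ((f ^^ (N + i)) (x j)) ((f ^^ (N + M + i)) z) \<le> \<epsilon>)"
    if "j \<in> J" for j T
  proof -
    define S where "S = N + M + T + M0"
    obtain d1 e1 where
      d1: "d1 \<in> class_delta f C D g" "dist ((f ^^ N) (x j)) ((f ^^ N) d1) < \<eta>" and
      e1: "e1 \<in> class_delta f C E g" "dist ((f ^^ N) (w j)) ((f ^^ N) e1) < \<eta>"
      using N[OF order_refl \<open>j \<in> J\<close>] by blast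
    obtain d2 where d2: "d2 \<in> class_delta f C D g" "dist ((f ^^ (N + T)) (x j)) ((f ^^ (N + T)) d2) < \<eta>"
      using N[of "N + T" j] \<open>j \<in> J\<close> by auto
    obtain e2 where e2: "e2 \<in> class_delta f C E g" "dist ((f ^^ S) (w j)) ((f ^^ S) e2) < \<eta>"
      using N[of S j] \<open>j \<in> J\<close> unfolding S_def by auto
    have "[int M + int N = phase g b a + int N] (mod int (period f C g))"
      using M(2) by (rule cong_add[OF _ cong_refl])
    from connecting_chain_between_class_orbits[OF g(1) assms(3,2) b a e1(1) d1(1) connect[OF M(1)] this e1(2) d1(2)]
    obtain \<zeta>1 where \<zeta>1: "is_chain f \<delta> \<zeta>1 M" "\<zeta>1 0 = (f ^^ N) (w j)" "\<zeta>1 M = (f ^^ N) (x j)"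
      by blast
    have "[int M0 + int (N + T) = phase g a b + int S] (mod int (period f C g))"
    proof -
      have "[(phase g a b + int M) + int (N + T + M0) = 0 + int (N + T + M0)] (mod int (period f C g))"
        using \<open>[phase g a b + int M = 0] (mod int (period f C g))\<close> by (rule cong_add[OF _ cong_refl])
      then show ?thesis by (simp add: S_def algebra_simps cong_sym_eq)
    qed
    from connecting_chain_between_class_orbits[OF g(1) assms(2,3) a b d2(1) e2(1) connect[OF order_refl] this d2(2) e2(2)]
    obtain \<zeta>2 where \<zeta>2: "is_chain f \<delta> \<zeta>2 M0" "\<zeta>2 0 = (f ^^ (N + T)) (x j)" "\<zeta>2 M0 = (f ^^ S) (w j)"
      by blast
    obtain z where z: "dist (w j) z \<le> \<epsilon>"
        "\<forall>i\<le>T. dist ((f ^^ (N + i)) (x j)) ((f ^^ (N + M + i)) z) \<le> \<epsilon>"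
        "(\<lambda>s. dist ((f ^^ s) z) ((f ^^ s) (w j))) \<longlonglongrightarrow> 0"
      using s_limit_shadows_excursion[OF \<delta>(2) less_imp_le[OF \<delta>(1)], of M \<zeta>1 N "w j" "x j" M0 \<zeta>2 T]
        \<zeta>1 \<zeta>2 unfolding is_chain_def S_def by blast
    moreover have "z \<in> Vs f C E" using Vs_asymptotic[OF _ z(3)] assms(6) \<open>j \<in> J\<close> by blast
    ultimately show ?thesis by blast
  qed
  then show ?thesis by blast
qed

lemma tracking_by_closure_points:
  assumes "s_limit_shadowing f" "D \<in> classes f C" "E \<in> classes f C" "finite J"
    and "\<forall>j\<in>J. x j \<in> Vs f C D" "\<forall>j\<in>J. y j \<in> closure (Vs f C E)" "\<epsilon> > 0"
  shows "\<exists>K L. \<forall>j\<in>J. \<exists>z. z \<in> closure (Vs f C E) \<and> dist (y j) z \<le> \<epsilon> \<and>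
           (\<forall>i. dist ((f ^^ (K + i)) (x j)) ((f ^^ (L + i)) z) \<le> \<epsilon>)"
proof -
  have "\<forall>j\<in>J. \<exists>w. w \<in> Vs f C E \<and> dist (y j) w < \<epsilon>/2"
    using assms(6,7) closure_approachable by (metis dist_commute half_gt_zero)
  from bchoice[OF this] obtain w where w: "\<forall>j\<in>J. w j \<in> Vs f C E \<and> dist (y j) (w j) < \<epsilon>/2"
    by blast
  then have "\<forall>j\<in>J. w j \<in> Vs f C E" "\<epsilon>/2 > 0" using assms(7) by simp_all
  from finite_horizon_tracking[OF assms(1-5) this]
  obtain K L where KL: "\<forall>j\<in>J. \<forall>T. \<exists>z\<in>Vs f C E. dist (w j) z \<le> \<epsilon>/2 \<and>
      (\<forall>i\<le>T. dist ((f ^^ (K + i)) (x j)) ((f ^^ (L + i)) z) \<le> \<epsilon>/2)"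
    by blast
  have "\<exists>z. z \<in> closure (Vs f C E) \<and> dist (y j) z \<le> \<epsilon> \<and>
      (\<forall>i. dist ((f ^^ (K + i)) (x j)) ((f ^^ (L + i)) z) \<le> \<epsilon>)" if "j \<in> J" for j
  proof -
    have "\<forall>T. \<exists>z\<in>Vs f C E. dist (w j) z \<le> \<epsilon>/2 \<and>
        (\<forall>i\<le>T. dist ((f ^^ (K + i)) (x j)) ((f ^^ (L + i)) z) \<le> \<epsilon>/2)"
      using KL that by blast
    from tracking_in_closure_of_finite_horizon_tracking[OF compact_space continuous this]
    obtain z where z: "z \<in> closure (Vs f C E)" "dist (w j) z \<le> \<epsilon>/2"
      "\<forall>i. dist ((f ^^ (K + i)) (x j)) ((f ^^ (L + i)) z) \<le> \<epsilon>/2"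
      by blast
    have "dist (y j) (w j) < \<epsilon>/2" using w that by blast
    then have "dist (y j) z \<le> \<epsilon>" using dist_triangle[of "y j" z "w j"] z(2) by linarith
    moreover have "dist ((f ^^ (K + i)) (x j)) ((f ^^ (L + i)) z) \<le> \<epsilon>" for i
      using z(3)[rule_format, of i] assms(7) by linarith
    ultimately show ?thesis using z(1) by blast
  qed
  then show ?thesis by blast
qed

end

theorem lemma3p1:
  fixes f :: "'a::metric_space \<Rightarrow> 'a"
    and C D E :: "'a set"
    and n :: nat and x y :: "nat \<Rightarrow> 'a" and \<epsilon> :: real
  assumes "compact (UNIV :: 'a set)"
    and "continuous_on UNIV f"
    and "s_limit_shadowing f"
    and "C \<in> chain_components f"
    and "D \<in> classes f C" and "E \<in> classes f C"
    and "n \<ge> 1"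
    and "\<forall>j\<in>{1..n}. x j \<in> Vs f C D"
    and "\<forall>j\<in>{1..n}. y j \<in> closure (Vs f C E)"
    and "\<epsilon> > 0"
  shows "\<exists>z :: nat \<Rightarrow> 'a. (\<forall>j\<in>{1..n}. z j \<in> closure (Vs f C E)) \<and>
           (\<exists>K L :: nat.
              (\<forall>j\<in>{1..n}. dist (y j) (z j) \<le> \<epsilon>) \<and>
              (\<forall>j\<in>{1..n}. \<forall>i. dist ((f ^^ (K + i)) (x j)) ((f ^^ (L + i)) (z j)) \<le> \<epsilon>))"
proof -
  interpret chain_component f C using assms(1,2,4) by unfold_locales
  obtain K L where "\<forall>j\<in>{1..n}. \<exists>z. z \<in> closure (Vs f C E) \<and> dist (y j) z \<le> \<epsilon> \<and>
      (\<forall>i. dist ((f ^^ (K + i)) (x j)) ((f ^^ (L + i)) z) \<le> \<epsilon>)"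
    using tracking_by_closure_points[OF assms(3,5,6) finite_atLeastAtMost assms(8,9,10)] by blast
  from bchoice[OF this] obtain z where "\<forall>j\<in>{1..n}. z j \<in> closure (Vs f C E) \<and> dist (y j) (z j) \<le> \<epsilon> \<and>
      (\<forall>i. dist ((f ^^ (K + i)) (x j)) ((f ^^ (L + i)) (z j)) \<le> \<epsilon>)"
    by blast
  then show ?thesis by blast
qed

end
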